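(* Let $\{x_i,v_i\}_{i\in[N]}$ be the global solution of the delayed Cucker–Smale system described in the context, let $\beta>0$ and \[ G(t):=d_v(t)+\beta\int_{\max\{0,t-2\tau\}}^t e^{-(t-s)}\int_s^t\max_{i\in[N]}|\dot v_i(r)|\,\mathrm dr\,\mathrm ds,\qquad t\ge0. \] Then for all $i,j\in[N]$ and $t\ge2\tau$, \[ |x_j(t-\tau)-x_i(t-\sigma)|\le|x_j(\tau)-x_i(2\tau-\sigma)|+\int_{2\tau}^t\Big(G(s-\tau)+\beta^{-1}e^{2\tau}G(s-\sigma)+\int_{s-\tau}^{s-\sigma}G(r-\tau)\,\mathrm dr\Big)\mathrm ds. \]
   Context: Let $N\ge2$, $d\ge1$ be integers, $[N]=\{1,\dots,N\}$, $0\le\sigma\le\tau$. Let $\psi:[0,\infty)\to[0,\infty)$ be continuous, nonincreasing, positive everywhere, with $\sup\psi\le1$. Given $x_i^0\in C^1([-\tau,0],\mathbb{R}^d)$, $v_i^0\in C([-\tau,0],\mathbb{R}^d)$ with $\frac{\mathrm d}{\mathrm dt}x_i^0=v_i^0$, $\{x_i,v_i\}$ is the global solution of $\dot x_i(t)=v_i(t)$, $\dot v_i(t)=\sum_{j\ne i}a_{ij}(t)(v_j(t-\tau)-v_i(t-\sigma))$ for $t>0$, with $a_{ij}(t)=\frac1{N-1}\psi(|x_i(t-\sigma)-x_j(t-\tau)|)$, and $x_i=x_i^0$, $v_i=v_i^0$ on $[-\tau,0]$ ($v_i$ continuously differentiable on $[0,\infty)$). $d_v(t):=\max_{i,j}|v_i(t)-v_j(t)|$.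 *)

theory Defs
  imports "HOL-Analysis.Analysis"
begin

definition vdiam :: "nat \<Rightarrow> (nat \<Rightarrow> real \<Rightarrow> 'a::euclidean_space) \<Rightarrow> real \<Rightarrow> real" where
  "vdiam N v t = Max {norm (v i t - v j t) | i j. i \<in> {1..N} \<and> j \<in> {1..N}}"

definition cs_weight :: "nat \<Rightarrow> (real \<Rightarrow> real) \<Rightarrow> real \<Rightarrow> real \<Rightarrow>
    (nat \<Rightarrow> real \<Rightarrow> 'a::euclidean_space) \<Rightarrow> nat \<Rightarrow> nat \<Rightarrow> real \<Rightarrow> real" where
  "cs_weight N \<psi> \<sigma> \<tau> x i j t = \<psi> (norm (x i (t - \<sigma>) - x j (t - \<tau>))) / (real N - 1)"

text \<open>The functional G(t) of the paper; dv i r stands for the derivative of v_i at r.\<close>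
definition Gfun :: "nat \<Rightarrow> real \<Rightarrow> real \<Rightarrow> (nat \<Rightarrow> real \<Rightarrow> 'a::euclidean_space)
    \<Rightarrow> (nat \<Rightarrow> real \<Rightarrow> 'a) \<Rightarrow> real \<Rightarrow> real" where
  "Gfun N \<tau> \<beta> v dv t = vdiam N v t + \<beta> * integral {max 0 (t - 2 * \<tau>)..t}
      (\<lambda>s. exp (- (t - s)) * integral {s..t} (\<lambda>r. Max ((\<lambda>i. norm (dv i r)) ` {1..N})))"

end

theory Submission
  imports Defs
begin

text \<open>
  The relative position x_j(s - tau) - x_i(s - sigma) has velocity v_j(s - tau) - v_i(s - sigma),
  whose norm is at most d_v(s - tau) plus the integral of A = max_k |v_k'| over [s - tau, s - sigma].
  Since the communication weights lie in [0, 1/(N-1)], the equation of motion bounds A(r) by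
  d_v(r - tau) plus the integral of A over [r - tau, r - sigma]. The resulting double integral of A
  is controlled by enlarging the inner interval to [r - tau, s - sigma], substituting u = r - tau and
  inserting the weight e^(-(s - sigma - u)) >= e^(-2 tau); this gives e^(2 tau) times the memory term
  of G(s - sigma), which is at most G(s - sigma)/beta. Integrating over [2 tau, t] yields the claim.
\<close>

lemma continuous_on_Max_image:
  fixes f :: "'i \<Rightarrow> 'b::topological_space \<Rightarrow> real"
  assumes "finite I" "I \<noteq> {}" "\<And>i. i \<in> I \<Longrightarrow> continuous_on S (f i)"
  shows "continuous_on S (\<lambda>y. Max ((\<lambda>i. f i y) ` I))"
  using assms
proof (induction I rule: finite_ne_induct)
  case (singleton i)
  then show ?case by simp
next
  case (insert i I)
  have "continuous_on S (\<lambda>y. max (f i y) (Max ((\<lambda>i. f i y) ` I)))"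
    using insert by (intro continuous_on_max) auto
  then show ?case
    using insert by simp
qed

lemma has_vector_derivative_shift_within:
  fixes g :: "real \<Rightarrow> 'a::real_normed_vector"
  assumes "(g has_vector_derivative g') (at (s - c) within T)"
    and "(\<lambda>u. u - c) ` S \<subseteq> T"
  shows "((\<lambda>u. g (u - c)) has_vector_derivative g') (at s within S)"
proof -
  have "((\<lambda>u. u - c) has_vector_derivative 1) (at s within S)"
    by (auto intro!: derivative_eq_intros)
  from vector_diff_chain_within[OF this has_vector_derivative_within_subset[OF assms]]
  show ?thesis by (simp add: o_def)
qed

lemma norm_diff_le_integral_of_deriv_bound:
  fixes g g' :: "real \<Rightarrow> 'a::banach"
  assumes "a \<le> b"
    and deriv: "\<And>t. t \<in> {a..b} \<Longrightarrow> (g has_vector_derivative g' t) (at t within {a..b})"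
    and m: "m integrable_on {a..b}"
    and bound: "\<And>t. t \<in> {a..b} \<Longrightarrow> norm (g' t) \<le> m t"
  shows "norm (g b - g a) \<le> integral {a..b} m"
proof -
  have "(g' has_integral (g b - g a)) {a..b}"
    using fundamental_theorem_of_calculus[OF \<open>a \<le> b\<close> deriv] .
  with integral_norm_bound_integral[OF has_integral_integrable m bound] show ?thesis
    by (simp add: integral_unique)
qed

lemma integral_nonneg_if_nonneg:
  fixes f :: "'n::euclidean_space \<Rightarrow> real"
  assumes "\<And>y. y \<in> S \<Longrightarrow> 0 \<le> f y"
  shows "0 \<le> integral S f"
  using assms integral_nonneg not_integrable_integral by (metis order_refl)

lemma continuous_on_integral_between:
  fixes f :: "real \<Rightarrow> 'a::banach"
  assumes f: "continuous_on {c..d} f" and "continuous_on S a" "continuous_on S b"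
    and ab: "\<And>y. y \<in> S \<Longrightarrow> c \<le> a y \<and> a y \<le> b y \<and> b y \<le> d"
  shows "continuous_on S (\<lambda>y. integral {a y..b y} f)"
proof -
  define P where "P z = integral {c..z} f" for z
  have P_cont: "continuous_on {c..d} P"
    unfolding P_def using f by (intro indefinite_integral_continuous_1 integrable_continuous_real)
  have eq: "P (b y) - P (a y) = integral {a y..b y} f" if "y \<in> S" for y
  proof -
    have f_int: "f integrable_on {c..b y}"
      using f ab[OF that] by (intro integrable_continuous_real) (auto elim: continuous_on_subset)
    show ?thesis
      unfolding P_def
      using ab[OF that] Henstock_Kurzweil_Integration.integral_combine[OF _ _ f_int, of "a y"]
      by (metis add_diff_cancel_left')
  qed
  have "continuous_on S (\<lambda>y. P (b y) - P (a y))"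
    using ab by (intro continuous_intros continuous_on_compose2[OF P_cont] assms) force+
  then show ?thesis
    by (rule continuous_on_eq) (simp add: eq)
qed

definition accel_max :: "nat \<Rightarrow> (nat \<Rightarrow> real \<Rightarrow> 'a::real_normed_vector) \<Rightarrow> real \<Rightarrow> real" where
  "accel_max N dv r = Max ((\<lambda>i. norm (dv i r)) ` {1..N})"

definition delay_memory :: "real \<Rightarrow> (real \<Rightarrow> real) \<Rightarrow> real \<Rightarrow> real" where
  "delay_memory \<tau> m t = integral {max 0 (t - 2 * \<tau>)..t} (\<lambda>s. exp (- (t - s)) * integral {s..t} m)"

lemma Gfun_eq: "Gfun N \<tau> \<beta> v dv t = vdiam N v t + \<beta> * delay_memory \<tau> (accel_max N dv) t"
  unfolding Gfun_def delay_memory_def accel_max_def[abs_def] ..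

lemma norm_le_accel_max: "i \<in> {1..N} \<Longrightarrow> norm (dv i r) \<le> accel_max N dv r"
  unfolding accel_max_def by (intro Max_ge) auto

lemma accel_max_nonneg: "1 \<le> N \<Longrightarrow> 0 \<le> accel_max N dv r"
  using order_trans[OF norm_ge_zero norm_le_accel_max[of 1]] by simp

lemma continuous_on_accel_max:
  assumes "1 \<le> N" "\<And>i. i \<in> {1..N} \<Longrightarrow> continuous_on S (dv i)"
  shows "continuous_on S (accel_max N dv)"
  unfolding accel_max_def using assms by (intro continuous_on_Max_image continuous_on_norm) auto

lemma vdiam_eq_Max_image:
  "vdiam N v t = Max ((\<lambda>p. norm (v (fst p) t - v (snd p) t)) ` ({1..N} \<times> {1..N}))"
  unfolding vdiam_def by (intro arg_cong[where f = Max]) force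

lemma norm_diff_le_vdiam: "i \<in> {1..N} \<Longrightarrow> j \<in> {1..N} \<Longrightarrow> norm (v i t - v j t) \<le> vdiam N v t"
  unfolding vdiam_eq_Max_image by (intro Max_ge) force+

lemma vdiam_nonneg: "1 \<le> N \<Longrightarrow> 0 \<le> vdiam N v t"
  using norm_diff_le_vdiam[of 1 N 1 v t] by simp

lemma continuous_on_vdiam:
  assumes "1 \<le> N" "\<And>i. i \<in> {1..N} \<Longrightarrow> continuous_on S (v i)"
  shows "continuous_on S (vdiam N v)"
  unfolding vdiam_eq_Max_image using assms
  by (intro continuous_on_Max_image continuous_intros) (auto simp: mem_Times_iff)

lemma delay_memory_nonneg:
  assumes "\<And>r. 0 \<le> r \<Longrightarrow> 0 \<le> m r"
  shows "0 \<le> delay_memory \<tau> m t"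
  unfolding delay_memory_def using assms
  by (intro integral_nonneg_if_nonneg mult_nonneg_nonneg) auto

lemma continuous_on_delay_memory:
  assumes m: "continuous_on {0..T} m" and "0 \<le> \<tau>"
  shows "continuous_on {0..T} (delay_memory \<tau> m)"
proof -
  define P where "P z = integral {0..z} m" for z
  define a where "a u = max 0 (u - 2 * \<tau>)" for u
  have a: "0 \<le> a u \<and> a u \<le> u" if "0 \<le> u" for u
    using that \<open>0 \<le> \<tau>\<close> by (simp add: a_def)
  have P_cont: "continuous_on {0..T} P"
    unfolding P_def using m by (intro indefinite_integral_continuous_1 integrable_continuous_real)
  \<comment> \<open>separating the variables in exp (-(u - s)) * (P u - P s) leaves only integrals
    between continuous limits\<close>
  have eq: "exp (- u) * (P u * integral {a u..u} exp - integral {a u..u} (\<lambda>s. exp s * P s))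
      = delay_memory \<tau> m u" if u: "u \<in> {0..T}" for u
  proof -
    have "exp (- (u - s)) * integral {s..u} m = exp (- u) * (P u * exp s - exp s * P s)"
      if s: "s \<in> {a u..u}" for s
    proof -
      have "m integrable_on {0..u}"
        using u by (intro integrable_continuous_real continuous_on_subset[OF m]) auto
      then have P_diff: "integral {s..u} m = P u - P s"
        unfolding P_def using s a[of u] u Henstock_Kurzweil_Integration.integral_combine[of 0 s u m]
        by (simp add: eq_diff_eq')
      have exp_split: "exp (- (u - s)) = exp (- u) * exp s"
        by (simp add: exp_add[symmetric])
      show ?thesis
        unfolding P_diff exp_split by (simp add: algebra_simps)
    qed
    then have "delay_memory \<tau> m u
        = integral {a u..u} (\<lambda>s. exp (- u) * (P u * exp s - exp s * P s))"
      unfolding delay_memory_def a_def by (intro integral_cong) auto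
    also have "\<dots> = exp (- u) * (P u * integral {a u..u} exp - integral {a u..u} (\<lambda>s. exp s * P s))"
      using a[of u] u
      by (subst integral_mult_right, subst integral_diff)
         (auto intro!: integrable_continuous_real continuous_intros
           continuous_on_subset[OF P_cont])
    finally show ?thesis by simp
  qed
  have "continuous_on {0..T}
      (\<lambda>u. exp (- u) * (P u * integral {a u..u} exp - integral {a u..u} (\<lambda>s. exp s * P s)))"
    unfolding a_def using \<open>0 \<le> \<tau>\<close>
    by (intro continuous_intros P_cont continuous_on_integral_between[where c = 0 and d = T]) auto
  then show ?thesis
    by (rule continuous_on_eq) (simp add: eq)
qed

lemma double_delay_integral_le_delay_memory:
  fixes m :: "real \<Rightarrow> real"
  assumes m_cont: "continuous_on {0..} m" and m_nonneg: "\<And>r. 0 \<le> r \<Longrightarrow> 0 \<le> m r"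
    and delays: "0 \<le> \<sigma>" "\<sigma> \<le> \<tau>" and s: "2 * \<tau> \<le> s"
  shows "integral {s - \<tau>..s - \<sigma>} (\<lambda>r. integral {r - \<tau>..r - \<sigma>} m)
    \<le> exp (2 * \<tau>) * delay_memory \<tau> m (s - \<sigma>)"
proof -
  define c where "c = s - \<sigma>"
  define tail where "tail u = integral {u..c} m" for u
  have m_cont_c: "continuous_on {0..c} m"
    using m_cont by (rule continuous_on_subset) auto
  have tail_cont: "continuous_on {a..c} tail" if "0 \<le> a" for a
    unfolding tail_def using that
    by (intro continuous_on_integral_between[OF m_cont_c] continuous_intros) auto
  have tail_nonneg: "0 \<le> tail u" if "0 \<le> u" for u
    unfolding tail_def using that m_nonneg by (intro integral_nonneg_if_nonneg) auto
  have "integral {s - \<tau>..c} (\<lambda>r. integral {r - \<tau>..r - \<sigma>} m) \<le> integral {s - \<tau>..c} (\<lambda>r. tail (r - \<tau>))"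
  proof (rule integral_le)
    show "(\<lambda>r. integral {r - \<tau>..r - \<sigma>} m) integrable_on {s - \<tau>..c}"
      unfolding c_def using s delays
      by (intro integrable_continuous_real continuous_on_integral_between[OF m_cont_c]
          continuous_intros) (auto simp: c_def)
    show "(\<lambda>r. tail (r - \<tau>)) integrable_on {s - \<tau>..c}"
      using s delays
      by (intro integrable_continuous_real continuous_on_compose2[OF tail_cont[of "s - 2 * \<tau>"]]
          continuous_intros) auto
    show "integral {r - \<tau>..r - \<sigma>} m \<le> tail (r - \<tau>)" if r: "r \<in> {s - \<tau>..c}" for r
      unfolding tail_def using r s delays m_nonneg
      by (intro integral_subset_le integrable_continuous_real continuous_on_subset[OF m_cont_c])
        (auto simp: c_def)
  qed
  also have "\<dots> = integral {s - 2 * \<tau>..c - \<tau>} tail"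
    using integral_shift_Icc_real[of "s - 2 * \<tau>" "c - \<tau>" "\<lambda>r. tail (r - \<tau>)" \<tau>]
    by (simp add: o_def algebra_simps)
  also have "\<dots> \<le> integral {s - 2 * \<tau>..c - \<tau>} (\<lambda>u. exp (2 * \<tau>) * (exp (- (c - u)) * tail u))"
  proof (rule integral_le)
    show "tail integrable_on {s - 2 * \<tau>..c - \<tau>}"
      using s delays
      by (intro integrable_continuous_real continuous_on_subset[OF tail_cont[of "s - 2 * \<tau>"]]) auto
    show "(\<lambda>u. exp (2 * \<tau>) * (exp (- (c - u)) * tail u)) integrable_on {s - 2 * \<tau>..c - \<tau>}"
      using s delays by (intro integrable_continuous_real continuous_intros
          continuous_on_subset[OF tail_cont[of "s - 2 * \<tau>"]]) auto
    show "tail u \<le> exp (2 * \<tau>) * (exp (- (c - u)) * tail u)" if u: "u \<in> {s - 2 * \<tau>..c - \<tau>}" for u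
    proof -
      have "1 \<le> exp (2 * \<tau> - (c - u))"
        using u delays by (simp add: c_def)
      then have "1 \<le> exp (2 * \<tau>) * exp (- (c - u))"
        by (simp add: exp_add[symmetric])
      moreover have "0 \<le> tail u"
        using u s by (intro tail_nonneg) auto
      ultimately show ?thesis
        by (metis mult.assoc mult_1 mult_right_mono)
    qed
  qed
  also have "\<dots> \<le> exp (2 * \<tau>) * integral {max 0 (c - 2 * \<tau>)..c} (\<lambda>u. exp (- (c - u)) * tail u)"
    unfolding integral_mult_right
  proof (intro mult_left_mono integral_subset_le)
    show "(\<lambda>u. exp (- (c - u)) * tail u) integrable_on {max 0 (c - 2 * \<tau>)..c}"
      by (intro integrable_continuous_real continuous_intros tail_cont) auto
    then show "(\<lambda>u. exp (- (c - u)) * tail u) integrable_on {s - 2 * \<tau>..c - \<tau>}"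
      by (rule integrable_on_subinterval) (use s delays in \<open>auto simp: c_def\<close>)
  qed (use s delays tail_nonneg in \<open>auto simp: c_def\<close>)
  also have "\<dots> = exp (2 * \<tau>) * delay_memory \<tau> m c"
    by (simp add: delay_memory_def tail_def)
  finally show ?thesis
    by (simp add: c_def)
qed

lemma norm_sum_scaleR_le:
  fixes u :: "'i \<Rightarrow> 'a::real_normed_vector"
  assumes w: "\<And>l. l \<in> A \<Longrightarrow> 0 \<le> w l \<and> w l \<le> c" and u: "\<And>l. l \<in> A \<Longrightarrow> norm (u l) \<le> B"
  shows "norm (\<Sum>l\<in>A. w l *\<^sub>R u l) \<le> real (card A) * c * B"
proof -
  have "norm (\<Sum>l\<in>A. w l *\<^sub>R u l) \<le> (\<Sum>l\<in>A. w l * norm (u l))"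
    using norm_sum[of "\<lambda>l. w l *\<^sub>R u l" A] w by simp
  also have "\<dots> \<le> (\<Sum>l\<in>A. c * B)"
    using w u by (intro sum_mono mult_mono) (meson norm_ge_zero order_trans)+
  finally show ?thesis
    by simp
qed

text \<open>Of the communication rate psi only the bounds 0 <= psi <= 1 enter the estimate.\<close>

locale delayed_cs_system =
  fixes N :: nat and \<sigma> \<tau> :: real and \<psi> :: "real \<Rightarrow> real"
    and x v dv :: "nat \<Rightarrow> real \<Rightarrow> 'a::euclidean_space"
  assumes N: "N \<ge> 2"
    and delays: "0 \<le> \<sigma>" "\<sigma> \<le> \<tau>"
    and psi_nonneg: "\<And>r. 0 \<le> r \<Longrightarrow> 0 \<le> \<psi> r"
    and psi_le1: "\<And>r. 0 \<le> r \<Longrightarrow> \<psi> r \<le> 1"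
    and v_cont: "\<And>i. i \<in> {1..N} \<Longrightarrow> continuous_on {-\<tau>..} (v i)"
    and x_deriv: "\<And>i t. i \<in> {1..N} \<Longrightarrow> -\<tau> \<le> t \<Longrightarrow>
                    (x i has_vector_derivative v i t) (at t within {-\<tau>..})"
    and v_C1: "\<And>i t. i \<in> {1..N} \<Longrightarrow> 0 \<le> t \<Longrightarrow>
                    (v i has_vector_derivative dv i t) (at t within {0..})"
    and dv_cont: "\<And>i. i \<in> {1..N} \<Longrightarrow> continuous_on {0..} (dv i)"
    and ode: "\<And>i t. i \<in> {1..N} \<Longrightarrow> 0 < t \<Longrightarrow>
                dv i t = (\<Sum>j\<in>{1..N} - {i}. cs_weight N \<psi> \<sigma> \<tau> x i j t *\<^sub>R (v j (t - \<tau>) - v i (t - \<sigma>)))"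
begin

lemma tau_nonneg: "0 \<le> \<tau>"
  using delays by simp

lemma accel_max_continuous: "continuous_on {0..} (accel_max N dv)"
  using N by (intro continuous_on_accel_max dv_cont) auto

lemma vdiam_continuous: "continuous_on {0..} (vdiam N v)"
  using N tau_nonneg by (intro continuous_on_vdiam continuous_on_subset[OF v_cont]) auto

lemma velocity_increment_le:
  assumes "k \<in> {1..N}" "0 \<le> a" "a \<le> b"
  shows "norm (v k b - v k a) \<le> integral {a..b} (accel_max N dv)"
  using assms
  by (intro norm_diff_le_integral_of_deriv_bound[where g' = "dv k"] norm_le_accel_max
      has_vector_derivative_within_subset[OF v_C1] integrable_continuous_real
      continuous_on_subset[OF accel_max_continuous]) auto

lemma delayed_velocity_diff_le:
  assumes "k \<in> {1..N}" "l \<in> {1..N}" "\<tau> \<le> r"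
  shows "norm (v l (r - \<tau>) - v k (r - \<sigma>))
    \<le> vdiam N v (r - \<tau>) + integral {r - \<tau>..r - \<sigma>} (accel_max N dv)"
proof (rule norm_diff_triangle_le)
  show "norm (v l (r - \<tau>) - v k (r - \<tau>)) \<le> vdiam N v (r - \<tau>)"
    by (rule norm_diff_le_vdiam[OF assms(2,1)])
  show "norm (v k (r - \<tau>) - v k (r - \<sigma>)) \<le> integral {r - \<tau>..r - \<sigma>} (accel_max N dv)"
    using velocity_increment_le[of k "r - \<tau>" "r - \<sigma>"] assms delays
    by (simp add: norm_minus_commute)
qed

lemma cs_weight_nonneg: "0 \<le> cs_weight N \<psi> \<sigma> \<tau> x k l r"
  using N psi_nonneg by (simp add: cs_weight_def)

lemma cs_weight_le: "cs_weight N \<psi> \<sigma> \<tau> x k l r \<le> 1 / (real N - 1)"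
  using N psi_le1 by (simp add: cs_weight_def divide_right_mono)

lemma accel_max_le:
  assumes "0 < r" "\<tau> \<le> r"
  shows "accel_max N dv r \<le> vdiam N v (r - \<tau>) + integral {r - \<tau>..r - \<sigma>} (accel_max N dv)"
    (is "_ \<le> ?B")
proof -
  have "norm (dv k r) \<le> ?B" if k: "k \<in> {1..N}" for k
  proof -
    have "norm (dv k r) \<le> real (card ({1..N} - {k})) * (1 / (real N - 1)) * ?B"
      unfolding ode[OF k \<open>0 < r\<close>] using k assms
      by (intro norm_sum_scaleR_le conjI cs_weight_nonneg cs_weight_le delayed_velocity_diff_le) auto
    also have "\<dots> = ?B"
      using k N by simp
    finally show ?thesis .
  qed
  then show ?thesis
    unfolding accel_max_def using N by (intro Max.boundedI) auto
qed

lemma Gfun_continuous: "continuous_on {0..T} (Gfun N \<tau> \<beta> v dv)"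
proof -
  have "continuous_on {0..T} (\<lambda>t. vdiam N v t + \<beta> * delay_memory \<tau> (accel_max N dv) t)"
    using tau_nonneg
    by (intro continuous_intros continuous_on_delay_memory
        continuous_on_subset[OF vdiam_continuous] continuous_on_subset[OF accel_max_continuous])
      auto
  then show ?thesis
    by (simp add: Gfun_eq[abs_def])
qed

lemma vdiam_le_Gfun: "0 \<le> \<beta> \<Longrightarrow> vdiam N v t \<le> Gfun N \<tau> \<beta> v dv t"
  using N by (simp add: Gfun_eq delay_memory_nonneg accel_max_nonneg)

lemma delay_memory_le_Gfun: "\<beta> * delay_memory \<tau> (accel_max N dv) t \<le> Gfun N \<tau> \<beta> v dv t"
  using N by (simp add: Gfun_eq vdiam_nonneg)

lemma integral_accel_max_le_Gfun:
  assumes \<beta>: "0 < \<beta>" and s: "2 * \<tau> \<le> s"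
  shows "integral {s - \<tau>..s - \<sigma>} (accel_max N dv)
    \<le> integral {s - \<tau>..s - \<sigma>} (\<lambda>r. Gfun N \<tau> \<beta> v dv (r - \<tau>)) + exp (2 * \<tau>) / \<beta> * Gfun N \<tau> \<beta> v dv (s - \<sigma>)"
proof (cases "\<tau> = 0")
  case True
  \<comment> \<open>then the equation of motion is unavailable at r = s = 0, but both intervals are degenerate\<close>
  then show ?thesis
    using delays \<beta> order_trans[OF vdiam_nonneg vdiam_le_Gfun] N by simp
next
  case False
  then have "0 < \<tau>"
    using tau_nonneg by simp
  have "integral {s - \<tau>..s - \<sigma>} (accel_max N dv)
      \<le> integral {s - \<tau>..s - \<sigma>}
          (\<lambda>r. vdiam N v (r - \<tau>) + integral {r - \<tau>..r - \<sigma>} (accel_max N dv))"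
  proof (rule integral_le)
    show "accel_max N dv integrable_on {s - \<tau>..s - \<sigma>}"
      using s tau_nonneg
      by (intro integrable_continuous_real continuous_on_subset[OF accel_max_continuous]) auto
    show "(\<lambda>r. vdiam N v (r - \<tau>) + integral {r - \<tau>..r - \<sigma>} (accel_max N dv))
        integrable_on {s - \<tau>..s - \<sigma>}"
      using s delays
      by (intro integrable_continuous_real continuous_intros
          continuous_on_compose2[OF vdiam_continuous]
          continuous_on_integral_between[where c = 0 and d = s]
          continuous_on_subset[OF accel_max_continuous]) auto
  qed (use s \<open>0 < \<tau>\<close> in \<open>auto intro: accel_max_le\<close>)
  also have "\<dots> = integral {s - \<tau>..s - \<sigma>} (\<lambda>r. vdiam N v (r - \<tau>))
      + integral {s - \<tau>..s - \<sigma>} (\<lambda>r. integral {r - \<tau>..r - \<sigma>} (accel_max N dv))"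
    using s delays
    by (intro integral_add integrable_continuous_real continuous_on_compose2[OF vdiam_continuous]
        continuous_on_integral_between[where c = 0 and d = s]
        continuous_on_subset[OF accel_max_continuous] continuous_intros) auto
  also have "\<dots> \<le> integral {s - \<tau>..s - \<sigma>} (\<lambda>r. Gfun N \<tau> \<beta> v dv (r - \<tau>))
      + exp (2 * \<tau>) * delay_memory \<tau> (accel_max N dv) (s - \<sigma>)"
  proof (rule add_mono)
    show "integral {s - \<tau>..s - \<sigma>} (\<lambda>r. vdiam N v (r - \<tau>))
        \<le> integral {s - \<tau>..s - \<sigma>} (\<lambda>r. Gfun N \<tau> \<beta> v dv (r - \<tau>))"
      using s delays \<beta>
      by (intro integral_le integrable_continuous_real vdiam_le_Gfun
          continuous_on_compose2[OF vdiam_continuous] continuous_on_compose2[OF Gfun_continuous]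
          continuous_intros) auto
    show "integral {s - \<tau>..s - \<sigma>} (\<lambda>r. integral {r - \<tau>..r - \<sigma>} (accel_max N dv))
        \<le> exp (2 * \<tau>) * delay_memory \<tau> (accel_max N dv) (s - \<sigma>)"
      using N delays s
      by (intro double_delay_integral_le_delay_memory accel_max_continuous accel_max_nonneg) auto
  qed
  also have "\<dots> \<le> integral {s - \<tau>..s - \<sigma>} (\<lambda>r. Gfun N \<tau> \<beta> v dv (r - \<tau>))
      + exp (2 * \<tau>) / \<beta> * Gfun N \<tau> \<beta> v dv (s - \<sigma>)"
    using delay_memory_le_Gfun[of \<beta> "s - \<sigma>"] \<beta> by (simp add: field_simps)
  finally show ?thesis .
qed

abbreviation mismatch_bound :: "real \<Rightarrow> real \<Rightarrow> real" where
  "mismatch_bound \<beta> s \<equiv> Gfun N \<tau> \<beta> v dv (s - \<tau>) + exp (2 * \<tau>) / \<beta> * Gfun N \<tau> \<beta> v dv (s - \<sigma>)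
    + integral {s - \<tau>..s - \<sigma>} (\<lambda>r. Gfun N \<tau> \<beta> v dv (r - \<tau>))"

lemma velocity_mismatch_le_bound:
  assumes "0 < \<beta>" "i \<in> {1..N}" "j \<in> {1..N}" "2 * \<tau> \<le> s"
  shows "norm (v j (s - \<tau>) - v i (s - \<sigma>)) \<le> mismatch_bound \<beta> s"
  using delayed_velocity_diff_le[of i j s] integral_accel_max_le_Gfun[of \<beta> s]
    vdiam_le_Gfun[of \<beta> "s - \<tau>"] assms tau_nonneg
  by linarith

lemma mismatch_bound_continuous: "continuous_on {2 * \<tau>..t} (mismatch_bound \<beta>)"
proof -
  have "continuous_on {\<tau>..t} (\<lambda>r. Gfun N \<tau> \<beta> v dv (r - \<tau>))"
    using tau_nonneg by (intro continuous_on_compose2[OF Gfun_continuous] continuous_intros) auto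
  then show ?thesis
    using delays
    by (intro continuous_intros continuous_on_compose2[OF Gfun_continuous[of t]]
        continuous_on_integral_between[where c = \<tau> and d = t]) auto
qed

end

theorem lemma4p4:
  fixes N :: nat and \<sigma> \<tau> \<beta> :: real and \<psi> :: "real \<Rightarrow> real"
    and x v dv :: "nat \<Rightarrow> real \<Rightarrow> 'a::euclidean_space"
  assumes N: "N \<ge> 2"
    and delays: "0 \<le> \<sigma>" "\<sigma> \<le> \<tau>"
    and psi_cont: "continuous_on {0..} \<psi>"
    and psi_mono: "\<And>r s. 0 \<le> r \<Longrightarrow> r \<le> s \<Longrightarrow> \<psi> s \<le> \<psi> r"
    and psi_pos: "\<And>r. 0 \<le> r \<Longrightarrow> 0 < \<psi> r"
    and psi_le1: "\<And>r. 0 \<le> r \<Longrightarrow> \<psi> r \<le> 1"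
    and v_cont: "\<And>i. i \<in> {1..N} \<Longrightarrow> continuous_on {-\<tau>..} (v i)"
    and x_deriv: "\<And>i t. i \<in> {1..N} \<Longrightarrow> -\<tau> \<le> t \<Longrightarrow>
                    (x i has_vector_derivative v i t) (at t within {-\<tau>..})"
    and v_C1: "\<And>i t. i \<in> {1..N} \<Longrightarrow> 0 \<le> t \<Longrightarrow>
                    (v i has_vector_derivative dv i t) (at t within {0..})"
    and dv_cont: "\<And>i. i \<in> {1..N} \<Longrightarrow> continuous_on {0..} (dv i)"
    and ode: "\<And>i t. i \<in> {1..N} \<Longrightarrow> 0 < t \<Longrightarrow>
                dv i t = (\<Sum>j\<in>{1..N} - {i}. cs_weight N \<psi> \<sigma> \<tau> x i j t *\<^sub>R (v j (t - \<tau>) - v i (t - \<sigma>)))"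
    and beta: "\<beta> > 0"
    and ij: "i \<in> {1..N}" "j \<in> {1..N}"
    and t: "t \<ge> 2 * \<tau>"
  shows "norm (x j (t - \<tau>) - x i (t - \<sigma>)) \<le> norm (x j \<tau> - x i (2 * \<tau> - \<sigma>))
          + integral {2 * \<tau>..t} (\<lambda>s. Gfun N \<tau> \<beta> v dv (s - \<tau>)
               + exp (2 * \<tau>) / \<beta> * Gfun N \<tau> \<beta> v dv (s - \<sigma>)
               + integral {s - \<tau>..s - \<sigma>} (\<lambda>r. Gfun N \<tau> \<beta> v dv (r - \<tau>)))"
proof -
  interpret delayed_cs_system N \<sigma> \<tau> \<psi> x v dv
    using assms by unfold_locales (auto intro: less_imp_le)
  define pos where "pos s = x j (s - \<tau>) - x i (s - \<sigma>)" for s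
  have "norm (pos t - pos (2 * \<tau>)) \<le> integral {2 * \<tau>..t} (mismatch_bound \<beta>)"
  proof (rule norm_diff_le_integral_of_deriv_bound)
    show "(pos has_vector_derivative v j (s - \<tau>) - v i (s - \<sigma>)) (at s within {2 * \<tau>..t})"
      if "s \<in> {2 * \<tau>..t}" for s
      unfolding pos_def using that ij tau_nonneg delays
      by (intro has_vector_derivative_diff has_vector_derivative_shift_within[OF x_deriv]) auto
    show "mismatch_bound \<beta> integrable_on {2 * \<tau>..t}"
      by (rule integrable_continuous_real[OF mismatch_bound_continuous])
    show "norm (v j (s - \<tau>) - v i (s - \<sigma>)) \<le> mismatch_bound \<beta> s" if "s \<in> {2 * \<tau>..t}" for s
      using that beta ij by (intro velocity_mismatch_le_bound) auto
  qed (use t in simp)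
  then show ?thesis
    using norm_triangle_sub[of "pos t" "pos (2 * \<tau>)"] by (simp add: pos_def)
qed

end
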